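(* The space $X_{\mathrm{crs}}$ is contractible.
   Context: Let $X$ be the following 2-dimensional CW-complex. Its 0-cells are $e_n^0$, $n\ge 0$; the point $x=e_0^0$ is called the origin. For each $n\ge1$ there are two 1-cells $e_n^1, e_{-n}^1$, each joining $x$ to $e_n^0$, so that $e_0^0\cup e_n^0\cup e_n^1\cup e_{-n}^1$ is homeomorphic to a circle; for each $n\ge1$ a 2-cell $e_n^2$ is attached via a homeomorphism $\varphi_n:S^1\to e_0^0\cup e_n^0\cup e_n^1\cup e_{-n}^1$. Thus each closed 2-cell $\overline{e_n^2}$ is a closed disk having $x$ and $e_n^0$ on its boundary, and $X$ is a wedge at $x$ of countably many closed disks, carrying the CW (weak) topology. The coarser topology on the set $X$ consists of all subsets $U\subset X$ that are open in the CW-topology and either do not contain $x$, or contain $\overline{e_n^2}\smallsetminus e_n^0$ for all but finitely many $n\ge1$. The set $X$ with this coarser topology is denoted $X_{\mathrm{crs}}$. *)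

theory Defs
  imports "HOL-Analysis.Analysis"
begin

text \<open>Model of the wedge X of countably many closed disks.
  The n-th closed disk (n >= 1) is a copy of the closed unit disk cball 0 1 in the complex plane;
  its boundary point 1 is glued to the common origin x, and its boundary point -1 is the 0-cell e_n^0.
  The two open boundary arcs (upper and lower half of the unit circle) are the 1-cells e_n^1, e_{-n}^1.
  Points of X are represented as pairs (n, z) with n >= 1, |z| <= 1, z ~= 1, together with the
  origin, represented as (0, 1).\<close>

definition X_origin :: "nat \<times> complex" where
  "X_origin = (0, 1)"

definition X_set :: "(nat \<times> complex) set" where
  "X_set = insert X_origin {(n, z). n \<ge> 1 \<and> z \<in> cball 0 1 \<and> z \<noteq> 1}"

definition disk_map :: "nat \<Rightarrow> complex \<Rightarrow> nat \<times> complex" where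
  "disk_map n z = (if z = 1 then X_origin else (n, z))"

definition cw_open :: "(nat \<times> complex) set \<Rightarrow> bool" where
  "cw_open U \<longleftrightarrow> U \<subseteq> X_set \<and>
     (\<forall>n\<ge>1. openin (top_of_set (cball (0::complex) 1)) {z \<in> cball 0 1. disk_map n z \<in> U})"

definition crs_open :: "(nat \<times> complex) set \<Rightarrow> bool" where
  "crs_open U \<longleftrightarrow> cw_open U \<and>
     (X_origin \<notin> U \<or>
      finite {n::nat. n \<ge> 1 \<and> \<not> (disk_map n ` (cball 0 1 - {-1}) \<subseteq> U)})"

definition X_crs :: "(nat \<times> complex) topology" where
  "X_crs = topology crs_open"

end

theory Submission
  imports Defs
begin

text \<open>Each closed disk is contracted along straight lines onto its boundary point 1, which is
  glued to the origin x. In the CW topology this is obviously continuous; in the coarser topology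
  the only issue is continuity at the origin. There the basic neighbourhoods consisting of the
  origin, small disks around 1 in finitely many closed 2-cells and everything except e_n^0 in all
  other closed 2-cells are mapped into themselves by the whole homotopy, because a straight line
  towards 1 gets closer to 1 and never passes through the 0-cell -1.\<close>

lemma dist_linepath_end:
  fixes a b :: "'a::real_normed_vector"
  assumes "t \<le> 1"
  shows "dist (linepath a b t) b = (1 - t) * dist a b"
proof -
  have "linepath a b t - b = (1 - t) *\<^sub>R (a - b)"
    by (simp add: linepath_def algebra_simps)
  then show ?thesis
    using assms by (simp add: dist_norm)
qed

lemma dist_linepath_linepath_le:
  fixes a b c :: "'a::real_normed_vector"
  assumes "0 \<le> s" "s \<le> 1"
  shows "dist (linepath a c s) (linepath b c t) \<le> dist a b + \<bar>s - t\<bar> * dist b c"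
proof -
  have "linepath a c s - linepath b c t = (1 - s) *\<^sub>R (a - b) + (s - t) *\<^sub>R (c - b)"
    by (simp add: linepath_def algebra_simps)
  then have "dist (linepath a c s) (linepath b c t) \<le> (1 - s) * dist a b + \<bar>s - t\<bar> * dist b c"
    using assms norm_triangle_ineq[of "(1 - s) *\<^sub>R (a - b)" "(s - t) *\<^sub>R (c - b)"]
    by (simp add: dist_norm norm_minus_commute)
  also have "\<dots> \<le> dist a b + \<bar>s - t\<bar> * dist b c"
    using assms by (simp add: mult_left_le_one_le)
  finally show ?thesis .
qed

lemma linepath_in_convex:
  assumes "convex S" "a \<in> S" "b \<in> S" "t \<in> {0..1}"
  shows "linepath a b t \<in> S"
  using assms convexD_alt unfolding linepath_def by auto

lemma linepath_to_one_eq_minus_one: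
  fixes z :: complex
  assumes "norm z \<le> 1" "t \<in> {0..1}" "linepath z 1 t = -1"
  shows "z = -1"
proof -
  have "dist (-1::complex) 1 = 2"
    by (simp add: dist_norm)
  then have "2 = (1 - t) * dist z 1"
    using assms dist_linepath_end[of t z 1] by simp
  moreover have "dist z 1 \<le> 2"
    using assms norm_triangle_ineq4[of z 1] by (simp add: dist_norm)
  ultimately have "2 \<le> (1 - t) * 2"
    using assms by (metis atLeastAtMost_iff diff_ge_0_iff_ge mult_left_mono)
  then have "t = 0"
    using assms by simp
  then show ?thesis
    using assms by (simp add: linepath_0')
qed

lemma cw_open_Int:
  assumes "cw_open S" "cw_open T"
  shows "cw_open (S \<inter> T)"
  unfolding cw_open_def
proof (intro conjI allI impI)
  show "S \<inter> T \<subseteq> X_set"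
    using assms by (auto simp: cw_open_def)
  fix n :: nat
  assume "n \<ge> 1"
  then have "openin (top_of_set (cball 0 1))
      ({z \<in> cball 0 1. disk_map n z \<in> S} \<inter> {z \<in> cball 0 1. disk_map n z \<in> T})"
    using assms unfolding cw_open_def by blast
  moreover have "{z \<in> cball 0 1. disk_map n z \<in> S \<inter> T} =
      {z \<in> cball 0 1. disk_map n z \<in> S} \<inter> {z \<in> cball 0 1. disk_map n z \<in> T}"
    by blast
  ultimately show "openin (top_of_set (cball (0::complex) 1)) {z \<in> cball 0 1. disk_map n z \<in> S \<inter> T}"
    by simp
qed

lemma cw_open_Union:
  assumes "\<And>S. S \<in> K \<Longrightarrow> cw_open S"
  shows "cw_open (\<Union>K)"
  unfolding cw_open_def
proof (intro conjI allI impI)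
  show "\<Union>K \<subseteq> X_set"
    using assms by (auto simp: cw_open_def)
  fix n :: nat
  assume "n \<ge> 1"
  then have "openin (top_of_set (cball 0 1)) (\<Union>S\<in>K. {z \<in> cball 0 1. disk_map n z \<in> S})"
    using assms unfolding cw_open_def by blast
  moreover have "{z \<in> cball 0 1. disk_map n z \<in> \<Union>K} = (\<Union>S\<in>K. {z \<in> cball 0 1. disk_map n z \<in> S})"
    by blast
  ultimately show "openin (top_of_set (cball (0::complex) 1)) {z \<in> cball 0 1. disk_map n z \<in> \<Union>K}"
    by simp
qed

lemma istopology_crs_open: "istopology crs_open"
  unfolding istopology_def
proof (intro conjI allI impI)
  let ?bad = "\<lambda>U. {n::nat. n \<ge> 1 \<and> \<not> disk_map n ` (cball 0 1 - {-1}) \<subseteq> U}"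
  fix S T
  assume S: "crs_open S" and T: "crs_open T"
  have "?bad (S \<inter> T) \<subseteq> ?bad S \<union> ?bad T"
    by blast
  moreover have "X_origin \<in> S \<inter> T \<Longrightarrow> finite (?bad S \<union> ?bad T)"
    using S T unfolding crs_open_def by blast
  ultimately show "crs_open (S \<inter> T)"
    using S T cw_open_Int unfolding crs_open_def by (meson finite_subset)
next
  let ?bad = "\<lambda>U. {n::nat. n \<ge> 1 \<and> \<not> disk_map n ` (cball 0 1 - {-1}) \<subseteq> U}"
  fix K
  assume K: "\<forall>S\<in>K. crs_open S"
  then have "cw_open (\<Union>K)"
    by (simp add: crs_open_def cw_open_Union)
  moreover have "finite (?bad (\<Union>K))" if "S \<in> K" "X_origin \<in> S" for S
  proof (rule finite_subset)
    show "?bad (\<Union>K) \<subseteq> ?bad S"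
      using that by blast
    show "finite (?bad S)"
      using K that unfolding crs_open_def by blast
  qed
  ultimately show "crs_open (\<Union>K)"
    unfolding crs_open_def by blast
qed

lemma openin_X_crs: "openin X_crs = crs_open"
  by (simp add: X_crs_def istopology_crs_open)

lemma crs_open_X_set: "crs_open X_set"
  unfolding crs_open_def cw_open_def
proof (intro conjI allI impI disjI2)
  fix n :: nat
  assume "n \<ge> 1"
  then have "{z \<in> cball 0 1. disk_map n z \<in> X_set} = cball 0 1"
    by (auto simp: disk_map_def X_set_def)
  then show "openin (top_of_set (cball (0::complex) 1)) {z \<in> cball 0 1. disk_map n z \<in> X_set}"
    by simp
next
  have "{n::nat. n \<ge> 1 \<and> \<not> disk_map n ` (cball 0 1 - {-1}) \<subseteq> X_set} = {}"
    by (auto simp: disk_map_def X_set_def)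
  then show "finite {n::nat. n \<ge> 1 \<and> \<not> disk_map n ` (cball 0 1 - {-1}) \<subseteq> X_set}"
    by (simp only: finite.emptyI)
qed simp

lemma topspace_X_crs: "topspace X_crs = X_set"
  using crs_open_X_set unfolding topspace_def openin_X_crs crs_open_def cw_open_def by blast

lemma X_set_cases:
  assumes "p \<in> X_set"
  obtains "p = X_origin" | n z where "p = (n, z)" "n \<ge> 1" "z \<in> cball 0 1" "z \<noteq> 1"
  using assms unfolding X_set_def by auto

lemma openin_X_crs_disk_part:
  assumes "n \<ge> 1" "openin (top_of_set (cball 0 1)) S" "1 \<notin> S"
  shows "openin X_crs (Pair n ` S)"
  unfolding openin_X_crs crs_open_def cw_open_def
proof (intro conjI allI impI disjI1)
  show "Pair n ` S \<subseteq> X_set"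
    using assms openin_subset[OF assms(2)] by (auto simp: X_set_def)
  show "X_origin \<notin> Pair n ` S"
    using assms by (auto simp: X_origin_def)
  fix m :: nat
  assume "m \<ge> 1"
  have "{z \<in> cball 0 1. disk_map m z \<in> Pair n ` S} = (if m = n then S else {})"
    using assms openin_subset[OF assms(2)] by (auto simp: disk_map_def X_origin_def)
  then show "openin (top_of_set (cball (0::complex) 1)) {z \<in> cball 0 1. disk_map m z \<in> Pair n ` S}"
    using assms by simp
qed

definition origin_nbhd :: "nat set \<Rightarrow> real \<Rightarrow> (nat \<times> complex) set" where
  "origin_nbhd F r = insert X_origin {(n, z). n \<ge> 1 \<and> z \<in> cball 0 1 \<and> z \<noteq> 1 \<and>
      (if n \<in> F then dist z 1 < r else z \<noteq> -1)}"

lemma openin_origin_nbhd: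
  assumes "finite F" "r > 0"
  shows "openin X_crs (origin_nbhd F r)"
  unfolding openin_X_crs crs_open_def cw_open_def
proof (intro conjI allI impI disjI2)
  show "origin_nbhd F r \<subseteq> X_set"
    by (auto simp: origin_nbhd_def X_set_def)
  fix n :: nat
  assume "n \<ge> 1"
  then have "{z \<in> cball 0 1. disk_map n z \<in> origin_nbhd F r} =
      cball 0 1 \<inter> (if n \<in> F then ball 1 r else - {-1})"
    using assms by (auto simp: origin_nbhd_def disk_map_def X_origin_def dist_commute)
  then show "openin (top_of_set (cball (0::complex) 1)) {z \<in> cball 0 1. disk_map n z \<in> origin_nbhd F r}"
    by auto
next
  have "{n::nat. n \<ge> 1 \<and> \<not> disk_map n ` (cball 0 1 - {-1}) \<subseteq> origin_nbhd F r} \<subseteq> F"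
    by (auto simp: origin_nbhd_def disk_map_def)
  then show "finite {n::nat. n \<ge> 1 \<and> \<not> disk_map n ` (cball 0 1 - {-1}) \<subseteq> origin_nbhd F r}"
    using assms finite_subset by blast
qed

lemma origin_nbhd_subset:
  assumes "openin X_crs U" "X_origin \<in> U"
  obtains F r where "finite F" "r > 0" "origin_nbhd F r \<subseteq> U"
proof -
  define F where "F = {n::nat. n \<ge> 1 \<and> \<not> disk_map n ` (cball 0 1 - {-1}) \<subseteq> U}"
  have U: "crs_open U"
    using assms by (simp add: openin_X_crs)
  then have "finite F"
    using assms unfolding F_def crs_open_def by blast
  have "\<exists>e>0. ball 1 e \<inter> cball 0 1 \<subseteq> {z \<in> cball 0 1. disk_map n z \<in> U}" if "n \<in> F" for n
  proof -
    have "openin (top_of_set (cball (0::complex) 1)) {z \<in> cball 0 1. disk_map n z \<in> U}"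
      using U that unfolding F_def crs_open_def cw_open_def by blast
    moreover have "(1::complex) \<in> {z \<in> cball 0 1. disk_map n z \<in> U}"
      using assms by (simp add: disk_map_def)
    ultimately show ?thesis
      unfolding openin_contains_ball by blast
  qed
  then obtain e where e: "\<And>n. n \<in> F \<Longrightarrow> e n > 0 \<and> ball 1 (e n) \<inter> cball 0 1 \<subseteq> {z \<in> cball 0 1. disk_map n z \<in> U}"
    by metis
  define r where "r = Min (insert 1 (e ` F))"
  have "r > 0"
    unfolding r_def using \<open>finite F\<close> e by (subst Min_gr_iff) auto
  have r_le: "r \<le> e n" if "n \<in> F" for n
    unfolding r_def using \<open>finite F\<close> that by (intro Min_le) auto
  have "(n, z) \<in> U" if "n \<ge> 1" "z \<in> cball 0 1" "z \<noteq> 1"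
    and near: "if n \<in> F then dist z 1 < r else z \<noteq> -1" for n z
  proof (cases "n \<in> F")
    case True
    then have "z \<in> ball 1 (e n) \<inter> cball 0 1"
      using that r_le[OF True] by (simp add: dist_commute)
    then show ?thesis
      using e[OF True] \<open>z \<noteq> 1\<close> by (auto simp: disk_map_def)
  next
    case False
    then have "disk_map n z \<in> U"
      using that unfolding F_def by auto
    then show ?thesis
      using \<open>z \<noteq> 1\<close> by (simp add: disk_map_def)
  qed
  then have "origin_nbhd F r \<subseteq> U"
    using assms unfolding origin_nbhd_def by auto
  then show ?thesis
    using that \<open>finite F\<close> \<open>r > 0\<close> by blast
qed

definition disk_contraction :: "real \<times> (nat \<times> complex) \<Rightarrow> nat \<times> complex" where
  "disk_contraction = (\<lambda>(t, n, z). disk_map n (linepath z 1 t))"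

lemma disk_contraction_Pair [simp]: "disk_contraction (t, n, z) = disk_map n (linepath z 1 t)"
  by (simp add: disk_contraction_def)

lemma disk_contraction_origin: "disk_contraction (t, X_origin) = X_origin"
  by (simp add: X_origin_def disk_map_def)

lemma linepath_to_one_in_cball:
  fixes z :: complex
  shows "z \<in> cball 0 1 \<Longrightarrow> t \<in> {0..1} \<Longrightarrow> linepath z 1 t \<in> cball 0 1"
  by (rule linepath_in_convex) auto

lemma disk_contraction_in_X_set:
  assumes "t \<in> {0..1}" "p \<in> X_set"
  shows "disk_contraction (t, p) \<in> X_set"
  using assms(2)
proof (cases rule: X_set_cases)
  case 1
  then show ?thesis
    by (simp add: disk_contraction_origin X_set_def)
next
  case (2 n z)
  then show ?thesis
    using assms linepath_to_one_in_cball[of z t] by (auto simp: disk_map_def X_set_def)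
qed

lemma disk_contraction_origin_nbhd:
  assumes "t \<in> {0..1}" "p \<in> origin_nbhd F r"
  shows "disk_contraction (t, p) \<in> origin_nbhd F r"
proof (cases "p = X_origin")
  case True
  then show ?thesis
    using assms by (simp add: disk_contraction_origin)
next
  case False
  then obtain n z where p: "p = (n, z)" "n \<ge> 1" "z \<in> cball 0 1"
      and near: "if n \<in> F then dist z 1 < r else z \<noteq> -1"
    using assms unfolding origin_nbhd_def by auto
  have "dist (linepath z 1 t) 1 \<le> dist z 1"
    using assms dist_linepath_end[of t z 1] by (simp add: mult_left_le_one_le)
  moreover have "linepath z 1 t \<noteq> -1" if "z \<noteq> -1"
    using assms p that linepath_to_one_eq_minus_one[of z t] by auto
  moreover have "linepath z 1 t \<in> cball 0 1"
    using assms p linepath_to_one_in_cball by blast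
  ultimately show ?thesis
    using p near unfolding origin_nbhd_def by (auto simp: disk_map_def)
qed

lemma disk_contraction_nbhd_disk_point:
  assumes U: "openin X_crs U" and n: "n \<ge> 1" and z0: "z0 \<in> cball 0 1" "z0 \<noteq> 1"
    and t0: "t0 \<in> {0..1}" and in_U: "disk_contraction (t0, n, z0) \<in> U"
  obtains d V where "d > 0" "openin X_crs V" "(n, z0) \<in> V"
    "disk_contraction ` (({0..1} \<inter> ball t0 d) \<times> V) \<subseteq> U"
proof -
  define w0 where "w0 = linepath z0 1 t0"
  have "openin (top_of_set (cball 0 1)) {z \<in> cball 0 1. disk_map n z \<in> U}"
    using U n by (simp add: openin_X_crs crs_open_def cw_open_def)
  moreover have "w0 \<in> {z \<in> cball 0 1. disk_map n z \<in> U}"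
    using in_U z0 t0 linepath_to_one_in_cball by (simp add: w0_def)
  ultimately obtain e where "e > 0" and e: "ball w0 e \<inter> cball 0 1 \<subseteq> {z \<in> cball 0 1. disk_map n z \<in> U}"
    unfolding openin_contains_ball by blast
  define d where "d = min (e / 3) (dist z0 1)"
  have "d > 0"
    using \<open>e > 0\<close> z0 by (simp add: d_def)
  have "1 \<notin> ball z0 d"
    by (simp add: d_def)
  then have "openin X_crs (Pair n ` (cball 0 1 \<inter> ball z0 d))"
    using n by (intro openin_X_crs_disk_part) (auto simp: openin_open_Int)
  moreover have "(n, z0) \<in> Pair n ` (cball 0 1 \<inter> ball z0 d)"
    using \<open>d > 0\<close> z0 by simp
  moreover have "disk_contraction ` (({0..1} \<inter> ball t0 d) \<times> Pair n ` (cball 0 1 \<inter> ball z0 d)) \<subseteq> U"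
  proof
    fix y
    assume "y \<in> disk_contraction ` (({0..1} \<inter> ball t0 d) \<times> Pair n ` (cball 0 1 \<inter> ball z0 d))"
    then obtain t z where y: "y = disk_map n (linepath z 1 t)"
      and t: "t \<in> {0..1}" "dist t0 t < d" and z: "z \<in> cball 0 1" "dist z0 z < d"
      by auto
    have "dist z0 1 \<le> 2"
      using z0 norm_triangle_ineq4[of z0 1] by (simp add: dist_norm)
    then have "\<bar>t - t0\<bar> * dist z0 1 \<le> d * 2"
      using t by (intro mult_mono) (auto simp: dist_real_def)
    then have "dist (linepath z 1 t) w0 < e"
      using dist_linepath_linepath_le[of t z 1 z0 t0] t z
      by (auto simp: w0_def d_def dist_commute)
    then show "y \<in> U"
      using e t z y linepath_to_one_in_cball by (auto simp: dist_commute)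
  qed
  ultimately show ?thesis
    using that \<open>d > 0\<close> by blast
qed

lemma continuous_map_disk_contraction:
  "continuous_map (prod_topology (top_of_set {0..1}) X_crs) X_crs disk_contraction"
  unfolding continuous_map_def
proof (intro conjI allI impI funcsetI)
  show "disk_contraction x \<in> topspace X_crs"
    if "x \<in> topspace (prod_topology (top_of_set {0..1}) X_crs)" for x
    using that disk_contraction_in_X_set by (auto simp: topspace_X_crs)
next
  fix U
  assume U: "openin X_crs U"
  let ?P = "prod_topology (top_of_set {0..1::real}) X_crs"
  let ?W = "{x \<in> topspace ?P. disk_contraction x \<in> U}"
  have box: "\<exists>B. openin ?P B \<and> (t0, p0) \<in> B \<and> B \<subseteq> ?W"
    if "open T" "t0 \<in> T" "t0 \<in> {0..1}" "openin X_crs V" "p0 \<in> V"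
      "disk_contraction ` (({0..1} \<inter> T) \<times> V) \<subseteq> U" for T V t0 p0
  proof (intro exI conjI)
    show "openin ?P (({0..1} \<inter> T) \<times> V)"
      using that by (simp add: openin_prod_Times_iff openin_open_Int)
    show "({0..1} \<inter> T) \<times> V \<subseteq> ?W"
      using that openin_subset[of X_crs V] by auto
  qed (use that in auto)
  show "openin ?P ?W"
    unfolding openin_subopen[of ?P ?W]
  proof (intro ballI)
    fix x
    assume "x \<in> ?W"
    then obtain t0 p0 where x: "x = (t0, p0)" "t0 \<in> {0..1}" "p0 \<in> X_set"
      and in_U: "disk_contraction (t0, p0) \<in> U"
      by (auto simp: topspace_X_crs)
    show "\<exists>B. openin ?P B \<and> x \<in> B \<and> B \<subseteq> ?W"
      using \<open>p0 \<in> X_set\<close>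
    proof (cases rule: X_set_cases)
      case 1
      then have "X_origin \<in> U"
        using in_U by (simp add: disk_contraction_origin)
      then obtain F r where "finite F" "r > 0" and sub: "origin_nbhd F r \<subseteq> U"
        using origin_nbhd_subset[OF U] by blast
      then have "openin X_crs (origin_nbhd F r)"
        by (simp add: openin_origin_nbhd)
      moreover have "X_origin \<in> origin_nbhd F r"
        by (simp add: origin_nbhd_def)
      moreover have "disk_contraction ` (({0..1} \<inter> UNIV) \<times> origin_nbhd F r) \<subseteq> U"
        using sub disk_contraction_origin_nbhd by blast
      ultimately show ?thesis
        using box[of UNIV t0 "origin_nbhd F r" p0] x 1 by simp
    next
      case (2 n z0)
      then obtain d V where "d > 0" "openin X_crs V" "p0 \<in> V"
        "disk_contraction ` (({0..1} \<inter> ball t0 d) \<times> V) \<subseteq> U"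
        using disk_contraction_nbhd_disk_point[OF U 2(2-4) \<open>t0 \<in> {0..1}\<close>] in_U
        unfolding 2(1) by blast
      then show ?thesis
        using box[of "ball t0 d" t0 V p0] x by auto
    qed
  qed
qed

theorem proposition3p2:
  shows "contractible_space X_crs"
  unfolding contractible_space_def
proof (intro exI)
  show "homotopic_with (\<lambda>x. True) X_crs X_crs id (\<lambda>x. X_origin)"
    unfolding homotopic_with[where P="\<lambda>x. True", simplified]
  proof (intro exI conjI ballI)
    show "continuous_map (prod_topology (top_of_set {0..1}) X_crs) X_crs disk_contraction"
      by (rule continuous_map_disk_contraction)
  next
    fix p
    assume "p \<in> topspace X_crs"
    then have "p \<in> X_set"
      by (simp add: topspace_X_crs)
    then show "disk_contraction (0, p) = id p"
      by (cases rule: X_set_cases) (auto simp: disk_contraction_origin disk_map_def linepath_0')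
    show "disk_contraction (1, p) = X_origin"
      by (cases p) (simp add: disk_map_def linepath_1')
  qed
qed

end
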